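(* Let $(G,\cdot,N,\star,\odot)$ be a left bracoid (a left skew bracoid with $(N,\star)$ abelian) and $(H,\circ)$ a group. Assume (a) $\boxdot$ is a transitive right action of $(H,\circ)$ on $N$ such that $g\odot(\eta\boxdot h)=(g\odot\eta)\boxdot h$ for all $g\in G$, $h\in H$, $\eta\in N$; and (b) ${}^{\alpha(g)}(\eta^{\beta(h)})=({}^{\alpha(g)}\eta)^{\beta(h)}$ for all $g\in G$, $h\in H$, $\eta\in N$. Then $(G,\cdot,\odot,H,\circ,\boxdot,N,\star)$ is a two-sided bracoid; in particular $(\eta\star\mu)\boxdot h=(\eta\boxdot h)\star\overline{(e_N\boxdot h)}\star(\mu\boxdot h)$ for all $\eta,\mu\in N$, $h\in H$.
   Context: For a group $(N,\star)$, $e_N$ denotes its identity and $\overline{\eta}$ the inverse of $\eta$. A left skew bracoid is $(G,\cdot,N,\star,\odot)$ with $(G,\cdot),(N,\star)$ groups and $\odot$ a transitive left action of $G$ on $N$ with $g\odot(\mu\star\eta)=(g\odot\mu)\star\overline{(g\odot e_N)}\star(g\odot\eta)$ for all $g\in G$, $\mu,\eta\in N$. A right skew bracoid is $(H,\circ,N,\star,\boxdot)$ with $(H,\circ),(N,\star)$ groups and $\boxdot$ a transitive right action of $H$ on $N$ with $(\eta\star\mu)\boxdot h=(\eta\boxdot h)\star\overline{(e_N\boxdot h)}\star(\mu\boxdot h)$ for all $h\in H$, $\eta,\mu\in N$. A two-sided bracoid $(G,\cdot,\odot,H,\circ,\boxdot,N,\star)$ consists of a left skew bracoid $(G,\cdot,N,\star,\odot)$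 and a right skew bracoid $(H,\circ,N,\star,\boxdot)$ with $(N,\star)$ abelian such that $g\odot(\eta\boxdot h)=(g\odot\eta)\boxdot h$ for all $g\in G,h\in H,\eta\in N$. For $g\in G$, ${}^{\alpha(g)}\eta=\overline{(g\odot e_N)}\star(g\odot\eta)\star\overline{\eta}$. For $h\in H$, $\eta^{\beta(h)}=\overline{\eta}\star(\eta\boxdot h)\star\overline{(e_N\boxdot h)}$. *)

theory Defs
  imports "HOL-Algebra.Group"
begin

definition left_action :: "('g,'a) monoid_scheme \<Rightarrow> ('n,'b) monoid_scheme \<Rightarrow> ('g \<Rightarrow> 'n \<Rightarrow> 'n) \<Rightarrow> bool" where
  "left_action G N act \<longleftrightarrow>
     (\<forall>g\<in>carrier G. \<forall>\<eta>\<in>carrier N. act g \<eta> \<in> carrier N) \<and>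
     (\<forall>\<eta>\<in>carrier N. act \<one>\<^bsub>G\<^esub> \<eta> = \<eta>) \<and>
     (\<forall>g\<in>carrier G. \<forall>k\<in>carrier G. \<forall>\<eta>\<in>carrier N. act (g \<otimes>\<^bsub>G\<^esub> k) \<eta> = act g (act k \<eta>))"

definition transitive_left_action :: "('g,'a) monoid_scheme \<Rightarrow> ('n,'b) monoid_scheme \<Rightarrow> ('g \<Rightarrow> 'n \<Rightarrow> 'n) \<Rightarrow> bool" where
  "transitive_left_action G N act \<longleftrightarrow> left_action G N act \<and>
     (\<forall>\<eta>\<in>carrier N. \<forall>\<mu>\<in>carrier N. \<exists>g\<in>carrier G. act g \<eta> = \<mu>)"

definition right_action :: "('h,'a) monoid_scheme \<Rightarrow> ('n,'b) monoid_scheme \<Rightarrow> ('n \<Rightarrow> 'h \<Rightarrow> 'n) \<Rightarrow> bool" where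
  "right_action H N ract \<longleftrightarrow>
     (\<forall>h\<in>carrier H. \<forall>\<eta>\<in>carrier N. ract \<eta> h \<in> carrier N) \<and>
     (\<forall>\<eta>\<in>carrier N. ract \<eta> \<one>\<^bsub>H\<^esub> = \<eta>) \<and>
     (\<forall>h\<in>carrier H. \<forall>k\<in>carrier H. \<forall>\<eta>\<in>carrier N. ract \<eta> (h \<otimes>\<^bsub>H\<^esub> k) = ract (ract \<eta> h) k)"

definition transitive_right_action :: "('h,'a) monoid_scheme \<Rightarrow> ('n,'b) monoid_scheme \<Rightarrow> ('n \<Rightarrow> 'h \<Rightarrow> 'n) \<Rightarrow> bool" where
  "transitive_right_action H N ract \<longleftrightarrow> right_action H N ract \<and>
     (\<forall>\<eta>\<in>carrier N. \<forall>\<mu>\<in>carrier N. \<exists>h\<in>carrier H. ract \<eta> h = \<mu>)"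

definition left_skew_bracoid :: "('g,'a) monoid_scheme \<Rightarrow> ('n,'b) monoid_scheme \<Rightarrow> ('g \<Rightarrow> 'n \<Rightarrow> 'n) \<Rightarrow> bool" where
  "left_skew_bracoid G N act \<longleftrightarrow> group G \<and> group N \<and> transitive_left_action G N act \<and>
     (\<forall>g\<in>carrier G. \<forall>\<mu>\<in>carrier N. \<forall>\<eta>\<in>carrier N.
        act g (\<mu> \<otimes>\<^bsub>N\<^esub> \<eta>) = act g \<mu> \<otimes>\<^bsub>N\<^esub> inv\<^bsub>N\<^esub> (act g \<one>\<^bsub>N\<^esub>) \<otimes>\<^bsub>N\<^esub> act g \<eta>)"

definition left_bracoid :: "('g,'a) monoid_scheme \<Rightarrow> ('n,'b) monoid_scheme \<Rightarrow> ('g \<Rightarrow> 'n \<Rightarrow> 'n) \<Rightarrow> bool" where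
  "left_bracoid G N act \<longleftrightarrow> left_skew_bracoid G N act \<and> comm_group N"

definition right_skew_bracoid :: "('h,'a) monoid_scheme \<Rightarrow> ('n,'b) monoid_scheme \<Rightarrow> ('n \<Rightarrow> 'h \<Rightarrow> 'n) \<Rightarrow> bool" where
  "right_skew_bracoid H N ract \<longleftrightarrow> group H \<and> group N \<and> transitive_right_action H N ract \<and>
     (\<forall>h\<in>carrier H. \<forall>\<eta>\<in>carrier N. \<forall>\<mu>\<in>carrier N.
        ract (\<eta> \<otimes>\<^bsub>N\<^esub> \<mu>) h = ract \<eta> h \<otimes>\<^bsub>N\<^esub> inv\<^bsub>N\<^esub> (ract \<one>\<^bsub>N\<^esub> h) \<otimes>\<^bsub>N\<^esub> ract \<mu> h)"

definition two_sided_bracoid ::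
  "('g,'a) monoid_scheme \<Rightarrow> ('g \<Rightarrow> 'n \<Rightarrow> 'n) \<Rightarrow> ('h,'c) monoid_scheme \<Rightarrow> ('n \<Rightarrow> 'h \<Rightarrow> 'n) \<Rightarrow> ('n,'b) monoid_scheme \<Rightarrow> bool" where
  "two_sided_bracoid G act H ract N \<longleftrightarrow>
     left_skew_bracoid G N act \<and> right_skew_bracoid H N ract \<and> comm_group N \<and>
     (\<forall>g\<in>carrier G. \<forall>h\<in>carrier H. \<forall>\<eta>\<in>carrier N. act g (ract \<eta> h) = ract (act g \<eta>) h)"

definition alpha_act :: "('g \<Rightarrow> 'n \<Rightarrow> 'n) \<Rightarrow> ('n,'b) monoid_scheme \<Rightarrow> 'g \<Rightarrow> 'n \<Rightarrow> 'n" where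
  "alpha_act act N g \<eta> = inv\<^bsub>N\<^esub> (act g \<one>\<^bsub>N\<^esub>) \<otimes>\<^bsub>N\<^esub> act g \<eta> \<otimes>\<^bsub>N\<^esub> inv\<^bsub>N\<^esub> \<eta>"

definition beta_act :: "('n \<Rightarrow> 'h \<Rightarrow> 'n) \<Rightarrow> ('n,'b) monoid_scheme \<Rightarrow> 'h \<Rightarrow> 'n \<Rightarrow> 'n" where
  "beta_act ract N h \<eta> = inv\<^bsub>N\<^esub> \<eta> \<otimes>\<^bsub>N\<^esub> ract \<eta> h \<otimes>\<^bsub>N\<^esub> inv\<^bsub>N\<^esub> (ract \<one>\<^bsub>N\<^esub> h)"

end

theory Submission
  imports Defs
begin

text \<open>
  Choosing for each \<open>a \<in> N\<close> some \<open>g\<close> with \<open>g \<odot> e = a\<close>, the product \<open>a \<circ> b = g \<odot> b\<close> makes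
  \<open>N\<close> a skew brace. It does not depend on the choice of \<open>g\<close> because \<open>\<odot>\<close> commutes with the
  transitive right action, and that action is recovered as \<open>ract \<eta> h = \<eta> \<circ> ract e h\<close>.
  Both \<open>\<alpha>(g)\<close> and \<open>\<beta>(h)\<close> act through the brace operation \<open>a * b = a\<inverse> (a \<circ> b) b\<inverse>\<close>, so
  hypothesis (b) says exactly that \<open>*\<close> is associative. For abelian \<open>N\<close> this forces right
  distributivity \<open>(x y) \<circ> c = (x \<circ> c) c\<inverse> (y \<circ> c)\<close>, as in Rump's characterisation of
  two-sided braces, and via \<open>ract \<eta> h = \<eta> \<circ> ract e h\<close> this is the right skew bracoid law.
\<close>

lemma (in group) mult_inv_cancel [simp]: "\<lbrakk>x \<in> carrier G; y \<in> carrier G\<rbrakk> \<Longrightarrow> x \<otimes> (inv x \<otimes> y) = y"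
  by (simp flip: m_assoc)

lemma (in comm_group) mult_lcomm_inv_cancel [simp]:
  "\<lbrakk>x \<in> carrier G; y \<in> carrier G; z \<in> carrier G\<rbrakk> \<Longrightarrow> x \<otimes> (y \<otimes> (inv x \<otimes> z)) = y \<otimes> z"
  by (simp add: m_lcomm [of x y])

locale skew_brace = group G for G (structure) +
  fixes circ :: "'a \<Rightarrow> 'a \<Rightarrow> 'a"
  assumes circ_closed [simp]: "\<lbrakk>a \<in> carrier G; b \<in> carrier G\<rbrakk> \<Longrightarrow> circ a b \<in> carrier G"
    and circ_assoc: "\<lbrakk>a \<in> carrier G; b \<in> carrier G; c \<in> carrier G\<rbrakk> \<Longrightarrow>
      circ (circ a b) c = circ a (circ b c)"
    and circ_one_left [simp]: "b \<in> carrier G \<Longrightarrow> circ \<one> b = b"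
    and circ_one_right [simp]: "a \<in> carrier G \<Longrightarrow> circ a \<one> = a"
    and circ_inverse: "a \<in> carrier G \<Longrightarrow> \<exists>a'\<in>carrier G. circ a a' = \<one> \<and> circ a' a = \<one>"
    and circ_mult_right: "\<lbrakk>a \<in> carrier G; b \<in> carrier G; c \<in> carrier G\<rbrakk> \<Longrightarrow>
      circ a (b \<otimes> c) = circ a b \<otimes> inv a \<otimes> circ a c"
begin

definition star :: "'a \<Rightarrow> 'a \<Rightarrow> 'a" where
  "star a b = inv a \<otimes> circ a b \<otimes> inv b"

lemma star_closed [simp]: "\<lbrakk>a \<in> carrier G; b \<in> carrier G\<rbrakk> \<Longrightarrow> star a b \<in> carrier G"
  by (simp add: star_def)

end

locale left_brace = comm_group G + skew_brace G circ for G (structure) and circ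
begin

lemma circ_eq_star: "\<lbrakk>a \<in> carrier G; b \<in> carrier G\<rbrakk> \<Longrightarrow> circ a b = a \<otimes> b \<otimes> star a b"
  by (simp add: star_def m_ac)

lemma star_mult_right:
  "\<lbrakk>a \<in> carrier G; b \<in> carrier G; c \<in> carrier G\<rbrakk> \<Longrightarrow> star a (b \<otimes> c) = star a b \<otimes> star a c"
  by (simp add: star_def circ_mult_right inv_mult m_ac)

lemma star_one_left [simp]: "b \<in> carrier G \<Longrightarrow> star \<one> b = \<one>"
  by (simp add: star_def)

lemma star_one_right [simp]: "a \<in> carrier G \<Longrightarrow> star a \<one> = \<one>"
  by (simp add: star_def)

lemma star_inv_right: "\<lbrakk>a \<in> carrier G; b \<in> carrier G\<rbrakk> \<Longrightarrow> star a (inv b) = inv (star a b)"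
  using star_mult_right [of a "inv b" b] by (simp add: inv_equality)

lemma star_circ_left:
  assumes "a \<in> carrier G" "b \<in> carrier G" "c \<in> carrier G"
  shows "star (circ a b) c = star a (star b c) \<otimes> star a c \<otimes> star b c"
proof -
  have "(a \<otimes> b \<otimes> c \<otimes> star a b) \<otimes> star (circ a b) c = circ (circ a b) c"
    using assms by (simp add: circ_eq_star m_ac)
  also have "\<dots> = circ a (circ b c)"
    using assms by (rule circ_assoc)
  also have "\<dots> = (a \<otimes> b \<otimes> c \<otimes> star a b) \<otimes> (star a (star b c) \<otimes> star a c \<otimes> star b c)"
    using assms by (simp add: circ_eq_star star_mult_right m_ac)
  finally show ?thesis
    using assms by simp
qed

lemma star_star_circ_inverse:
  assumes "a \<in> carrier G" "a' \<in> carrier G" "c \<in> carrier G" and "circ a a' = \<one>"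
  shows "star a (star a' c) = inv (star a c \<otimes> star a' c)"
  using star_circ_left [of a a' c] assms by (simp add: inv_equality m_assoc)

end

locale left_brace_star_assoc = left_brace +
  assumes star_assoc: "\<lbrakk>a \<in> carrier G; b \<in> carrier G; c \<in> carrier G\<rbrakk> \<Longrightarrow>
    star (star a b) c = star a (star b c)"
begin

lemma star_inv_left:
  assumes "a \<in> carrier G" "c \<in> carrier G"
  shows "star (inv a) c = inv (star a c)"
proof -
  have "circ a (inv a) = star a (inv a)"
    using assms by (simp add: circ_eq_star)
  then have "star a c \<otimes> star (inv a) c = \<one>"
    using star_circ_left [of a "inv a" c] assms by (simp add: star_assoc m_assoc)
  then show ?thesis
    using assms by (intro inv_equality [symmetric]) (simp_all add: m_comm)
qed

lemma star_mult_star_left: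
  assumes a: "a \<in> carrier G" and b: "b \<in> carrier G" and c: "c \<in> carrier G"
  shows "star (a \<otimes> star a b) c = star a (c \<otimes> star b c)"
proof -
  obtain a' where a': "a' \<in> carrier G" and "circ a a' = \<one>"
    using circ_inverse [OF a] by blast
  then have star_a_star_a': "star a (star a' x) = inv (star a x) \<otimes> inv (star a' x)"
    if "x \<in> carrier G" for x
    using a that by (simp add: star_star_circ_inverse inv_mult)
  define d where "d = inv (star a' b)"
  have d: "d \<in> carrier G"
    using a' b by (simp add: d_def)
  have "star a d = star a b \<otimes> star a' b"
    using a a' b by (simp add: d_def star_inv_right star_a_star_a' inv_mult)
  then have "circ a d = a \<otimes> star a b"
    using a a' b d by (simp add: circ_eq_star d_def m_ac)
  then have "star (a \<otimes> star a b) c = star a (star d c) \<otimes> star a c \<otimes> star d c"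
    using star_circ_left [OF a d c] by simp
  also have "star d c = inv (star a' (star b c))"
    using a' b c by (simp add: d_def star_inv_left star_assoc)
  also have "star a (inv (star a' (star b c))) = star a (star b c) \<otimes> star a' (star b c)"
    using a a' b c by (simp add: star_inv_right star_a_star_a' inv_mult)
  finally show ?thesis
    using a a' b c by (simp add: star_mult_right m_ac)
qed

lemma star_mult_left:
  assumes x: "x \<in> carrier G" and y: "y \<in> carrier G" and c: "c \<in> carrier G"
  shows "star (x \<otimes> y) c = star x c \<otimes> star y c"
proof -
  obtain y' where y': "y' \<in> carrier G" and "circ y' y = \<one>"
    using circ_inverse [OF y] by blast
  then have y_star: "y \<otimes> star y' y = inv y'"
    using y by (intro inv_equality [symmetric]) (simp_all add: circ_eq_star m_ac)
  have star_y'_y: "star y' (c \<otimes> star y c) = inv (star y c)"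
    using y y' c \<open>circ y' y = \<one>\<close> by (simp add: star_mult_right star_star_circ_inverse inv_mult)
  define p where "p = x \<otimes> star x y'"
  have p: "p \<in> carrier G"
    using x y' by (simp add: p_def)
  have "star p y = inv (star x y')"
    using x y y' by (simp add: p_def star_mult_star_left y_star star_inv_right)
  then have "circ p y = x \<otimes> y"
    using x y y' by (simp add: circ_eq_star p_def m_ac)
  then have "star (x \<otimes> y) c = star p (star y c) \<otimes> star p c \<otimes> star y c"
    using star_circ_left [OF p y c] by simp
  also have "\<dots> = star p (c \<otimes> star y c) \<otimes> star y c"
    using p y c by (simp add: star_mult_right m_ac)
  also have "star p (c \<otimes> star y c) = star x c"
    using x y y' c by (simp add: p_def star_mult_star_left star_y'_y m_assoc)
  finally show ?thesis .
qed

lemma circ_mult_left: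
  "\<lbrakk>x \<in> carrier G; y \<in> carrier G; c \<in> carrier G\<rbrakk> \<Longrightarrow> circ (x \<otimes> y) c = circ x c \<otimes> inv c \<otimes> circ y c"
  by (simp add: circ_eq_star star_mult_left m_ac)

end

locale commuting_bracoid_actions =
  fixes G :: "('g, 'a) monoid_scheme" and N :: "('n, 'b) monoid_scheme"
    and H :: "('h, 'c) monoid_scheme"
    and act :: "'g \<Rightarrow> 'n \<Rightarrow> 'n" and ract :: "'n \<Rightarrow> 'h \<Rightarrow> 'n"
  assumes left_skew_bracoid: "left_skew_bracoid G N act"
    and transitive_right_action: "transitive_right_action H N ract"
    and act_ract_commute:
      "\<lbrakk>g \<in> carrier G; h \<in> carrier H; \<eta> \<in> carrier N\<rbrakk> \<Longrightarrow> act g (ract \<eta> h) = ract (act g \<eta>) h"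
begin

sublocale G: group G
  using left_skew_bracoid by (simp add: left_skew_bracoid_def)

sublocale N: group N
  using left_skew_bracoid by (simp add: left_skew_bracoid_def)

lemma act_closed: "\<lbrakk>g \<in> carrier G; \<eta> \<in> carrier N\<rbrakk> \<Longrightarrow> act g \<eta> \<in> carrier N"
  using left_skew_bracoid
  by (simp add: left_skew_bracoid_def transitive_left_action_def left_action_def)

lemma act_one: "\<eta> \<in> carrier N \<Longrightarrow> act \<one>\<^bsub>G\<^esub> \<eta> = \<eta>"
  using left_skew_bracoid
  by (simp add: left_skew_bracoid_def transitive_left_action_def left_action_def)

lemma act_mult:
  "\<lbrakk>g \<in> carrier G; k \<in> carrier G; \<eta> \<in> carrier N\<rbrakk> \<Longrightarrow> act (g \<otimes>\<^bsub>G\<^esub> k) \<eta> = act g (act k \<eta>)"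
  using left_skew_bracoid
  by (simp add: left_skew_bracoid_def transitive_left_action_def left_action_def)

lemma act_mult_right:
  "\<lbrakk>g \<in> carrier G; \<mu> \<in> carrier N; \<eta> \<in> carrier N\<rbrakk> \<Longrightarrow>
    act g (\<mu> \<otimes>\<^bsub>N\<^esub> \<eta>) = act g \<mu> \<otimes>\<^bsub>N\<^esub> inv\<^bsub>N\<^esub> (act g \<one>\<^bsub>N\<^esub>) \<otimes>\<^bsub>N\<^esub> act g \<eta>"
  using left_skew_bracoid by (simp add: left_skew_bracoid_def)

lemma ract_closed: "\<lbrakk>\<eta> \<in> carrier N; h \<in> carrier H\<rbrakk> \<Longrightarrow> ract \<eta> h \<in> carrier N"
  using transitive_right_action by (simp add: transitive_right_action_def right_action_def)

lemma obtain_act_one: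
  assumes "\<eta> \<in> carrier N"
  obtains g where "g \<in> carrier G" and "act g \<one>\<^bsub>N\<^esub> = \<eta>"
  using left_skew_bracoid assms N.one_closed
  by (metis left_skew_bracoid_def transitive_left_action_def)

lemma obtain_ract_one:
  assumes "\<eta> \<in> carrier N"
  obtains h where "h \<in> carrier H" and "ract \<one>\<^bsub>N\<^esub> h = \<eta>"
  using transitive_right_action assms by (auto simp: transitive_right_action_def)

definition circ :: "'n \<Rightarrow> 'n \<Rightarrow> 'n" where
  "circ a b = act (SOME g. g \<in> carrier G \<and> act g \<one>\<^bsub>N\<^esub> = a) b"

lemma circ_act_one:
  assumes g: "g \<in> carrier G" and b: "b \<in> carrier N"
  shows "circ (act g \<one>\<^bsub>N\<^esub>) b = act g b"
proof -
  define g' where "g' = (SOME g'. g' \<in> carrier G \<and> act g' \<one>\<^bsub>N\<^esub> = act g \<one>\<^bsub>N\<^esub>)"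
  have g': "g' \<in> carrier G \<and> act g' \<one>\<^bsub>N\<^esub> = act g \<one>\<^bsub>N\<^esub>"
    unfolding g'_def by (rule someI [where x = g]) (simp add: g)
  obtain h where h: "h \<in> carrier H" and b_eq: "ract \<one>\<^bsub>N\<^esub> h = b"
    using obtain_ract_one [OF b] .
  have "circ (act g \<one>\<^bsub>N\<^esub>) b = act g' (ract \<one>\<^bsub>N\<^esub> h)"
    by (simp add: circ_def g'_def b_eq)
  also have "\<dots> = ract (act g \<one>\<^bsub>N\<^esub>) h"
    using g' h by (simp add: act_ract_commute)
  also have "\<dots> = act g b"
    using g h by (simp add: act_ract_commute flip: b_eq)
  finally show ?thesis .
qed

lemma ract_eq_circ:
  assumes "\<eta> \<in> carrier N" and "h \<in> carrier H"
  shows "ract \<eta> h = circ \<eta> (ract \<one>\<^bsub>N\<^esub> h)"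
proof -
  obtain g where "g \<in> carrier G" and "act g \<one>\<^bsub>N\<^esub> = \<eta>"
    using obtain_act_one [OF assms(1)] .
  with assms show ?thesis
    using transitive_right_action
    by (auto simp: circ_act_one act_ract_commute transitive_right_action_def right_action_def)
qed

sublocale N: skew_brace N circ
proof unfold_locales
  fix a b c
  assume a: "a \<in> carrier N" and b: "b \<in> carrier N" and c: "c \<in> carrier N"
  obtain g where g: "g \<in> carrier G" and a_eq: "act g \<one>\<^bsub>N\<^esub> = a"
    using obtain_act_one [OF a] .
  obtain k where k: "k \<in> carrier G" and b_eq: "act k \<one>\<^bsub>N\<^esub> = b"
    using obtain_act_one [OF b] .
  show "circ a b \<in> carrier N"
    using g b by (simp add: circ_act_one act_closed flip: a_eq)
  show "circ (circ a b) c = circ a (circ b c)"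
    using g k c circ_act_one [of "g \<otimes>\<^bsub>G\<^esub> k" c]
    by (simp add: circ_act_one act_closed act_mult flip: a_eq b_eq)
  show "circ a \<one>\<^bsub>N\<^esub> = a"
    using g by (simp add: circ_act_one flip: a_eq)
  show "circ \<one>\<^bsub>N\<^esub> b = b"
    using circ_act_one [of "\<one>\<^bsub>G\<^esub>" b] b by (simp add: act_one)
  show "circ a (b \<otimes>\<^bsub>N\<^esub> c) = circ a b \<otimes>\<^bsub>N\<^esub> inv\<^bsub>N\<^esub> a \<otimes>\<^bsub>N\<^esub> circ a c"
    using g b c by (simp add: circ_act_one act_mult_right flip: a_eq)
  define a' where "a' = act (inv\<^bsub>G\<^esub> g) \<one>\<^bsub>N\<^esub>"
  have "a' \<in> carrier N" and "circ a a' = \<one>\<^bsub>N\<^esub>" and "circ a' a = \<one>\<^bsub>N\<^esub>"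
    using g by (simp_all add: a'_def circ_act_one act_closed act_one flip: a_eq act_mult)
  then show "\<exists>a'\<in>carrier N. circ a a' = \<one>\<^bsub>N\<^esub> \<and> circ a' a = \<one>\<^bsub>N\<^esub>"
    by blast
qed

lemma alpha_act_eq_star:
  "\<lbrakk>g \<in> carrier G; \<eta> \<in> carrier N\<rbrakk> \<Longrightarrow> alpha_act act N g \<eta> = N.star (act g \<one>\<^bsub>N\<^esub>) \<eta>"
  by (simp add: alpha_act_def N.star_def circ_act_one)

lemma beta_act_eq_star:
  "\<lbrakk>h \<in> carrier H; \<eta> \<in> carrier N\<rbrakk> \<Longrightarrow> beta_act ract N h \<eta> = N.star \<eta> (ract \<one>\<^bsub>N\<^esub> h)"
  by (simp add: beta_act_def N.star_def ract_eq_circ [of \<eta> h])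

lemma star_assoc_if_alpha_beta_commute:
  assumes alpha_beta: "\<forall>g\<in>carrier G. \<forall>h\<in>carrier H. \<forall>\<eta>\<in>carrier N.
      alpha_act act N g (beta_act ract N h \<eta>) = beta_act ract N h (alpha_act act N g \<eta>)"
    and a: "a \<in> carrier N" and b: "b \<in> carrier N" and c: "c \<in> carrier N"
  shows "N.star (N.star a b) c = N.star a (N.star b c)"
proof -
  obtain g where g: "g \<in> carrier G" and a_eq: "act g \<one>\<^bsub>N\<^esub> = a"
    using obtain_act_one [OF a] .
  obtain h where h: "h \<in> carrier H" and c_eq: "ract \<one>\<^bsub>N\<^esub> h = c"
    using obtain_ract_one [OF c] .
  have "alpha_act act N g (beta_act ract N h b) = beta_act ract N h (alpha_act act N g b)"
    using alpha_beta g h b by blast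
  then show ?thesis
    using g h a b c by (simp add: alpha_act_eq_star beta_act_eq_star a_eq c_eq)
qed

end

theorem theorem3p6:
  fixes G :: "('g,'a) monoid_scheme" and N :: "('n,'b) monoid_scheme"
    and H :: "('h,'c) monoid_scheme"
    and act :: "'g \<Rightarrow> 'n \<Rightarrow> 'n" and ract :: "'n \<Rightarrow> 'h \<Rightarrow> 'n"
  assumes lb: "left_bracoid G N act"
    and grpH: "group H"
    and ra: "transitive_right_action H N ract"
    and comm: "\<forall>g\<in>carrier G. \<forall>h\<in>carrier H. \<forall>\<eta>\<in>carrier N. act g (ract \<eta> h) = ract (act g \<eta>) h"
    and ab: "\<forall>g\<in>carrier G. \<forall>h\<in>carrier H. \<forall>\<eta>\<in>carrier N.
               alpha_act act N g (beta_act ract N h \<eta>) = beta_act ract N h (alpha_act act N g \<eta>)"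
  shows "two_sided_bracoid G act H ract N \<and>
         (\<forall>\<eta>\<in>carrier N. \<forall>\<mu>\<in>carrier N. \<forall>h\<in>carrier H.
            ract (\<eta> \<otimes>\<^bsub>N\<^esub> \<mu>) h = ract \<eta> h \<otimes>\<^bsub>N\<^esub> inv\<^bsub>N\<^esub> (ract \<one>\<^bsub>N\<^esub> h) \<otimes>\<^bsub>N\<^esub> ract \<mu> h)"
proof -
  interpret commuting_bracoid_actions G N H act ract
    using lb ra comm by unfold_locales (auto simp: left_bracoid_def)
  interpret N: left_brace_star_assoc N circ
    using lb star_assoc_if_alpha_beta_commute [OF ab]
    by (intro left_brace_star_assoc.intro left_brace.intro left_brace_star_assoc_axioms.intro
        N.skew_brace_axioms) (auto simp: left_bracoid_def)
  have ract_mult: "ract (\<eta> \<otimes>\<^bsub>N\<^esub> \<mu>) h = ract \<eta> h \<otimes>\<^bsub>N\<^esub> inv\<^bsub>N\<^esub> (ract \<one>\<^bsub>N\<^esub> h) \<otimes>\<^bsub>N\<^esub> ract \<mu> h"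
    if "\<eta> \<in> carrier N" "\<mu> \<in> carrier N" "h \<in> carrier H" for \<eta> \<mu> h
    using that N.circ_mult_left [of \<eta> \<mu> "ract \<one>\<^bsub>N\<^esub> h"]
    by (simp add: ract_closed ract_eq_circ [of \<eta> h] ract_eq_circ [of \<mu> h]
        ract_eq_circ [of "\<eta> \<otimes>\<^bsub>N\<^esub> \<mu>" h])
  then show ?thesis
    using lb grpH ra comm
    by (auto simp: two_sided_bracoid_def right_skew_bracoid_def left_bracoid_def left_skew_bracoid_def)
qed

end
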